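(* On \(\mathcal F\), the Neveu–Schwarz operator \(L_1\) equals \(-D_{\mathcal F}\), where \[ D_{\mathcal F}=\sum_{n\ge1}x_n\frac{\partial}{\partial x_{n+1}}+\sum_{m\ge0}y_{m+1/2}\frac{\partial}{\partial y_{m+3/2}}. \]
   Context: \(\mathcal F=\mathbb C[x_1,x_2,\dots]\otimes\Lambda_{\mathbb C}(y_{1/2},y_{3/2},\dots)\) (identified with \(H^*(\mathrm{Fred}_0\times\mathrm{Fred}_{\mathrm{sa}}^1;\mathbb C)\), \(x_n\) and \(y_{m+1/2}\) being components of the even and odd Chern characters). Let \(\beta=\sqrt2\). For \(n>0\): \(a_{-n}=(-1)^{n-1}\frac{n!}{\beta}x_n\), \(a_n=(-1)^{n-1}\frac{\beta}{(n-1)!}\frac{\partial}{\partial x_n}\); \(a_0=0\). For \(m\ge0\): \(b_{-(m+1/2)}=(-1)^mm!\,y_{m+1/2}\), \(b_{m+1/2}=\frac{(-1)^m}{m!}\frac{\partial}{\partial y_{m+1/2}}\) (left derivative on the exterior algebra). \(L_n=\tfrac12\sum_{m\in\mathbb Z}:a_ma_{n-m}:+\tfrac14\sum_{r\in\mathbb Z+1/2}(n-2r):b_rb_{n-r}:\), where normal ordering places modes of negative index to the left of modes of positive index (with the Koszul sign when interchanging odd modes). *)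

theory Defs
  imports "HOL-Analysis.Analysis"
begin

text \<open>Model of F = C[x_1,x_2,...] (x) Lambda(y_{1/2},y_{3/2},...).
  A basis monomial is a pair (e, S): e n is the exponent of x_n (n >= 1; e 0 = 0),
  S is a finite set of indices m, standing for the exterior monomial
  y_{s_1+1/2} y_{s_2+1/2} ... with s_1 < s_2 < ... (increasing order).\<close>

type_synonym mono = "(nat \<Rightarrow> nat) \<times> nat set"
type_synonym Fel = "mono \<Rightarrow> complex"

definition valid_mono :: "mono \<Rightarrow> bool" where
  "valid_mono \<mu> = (finite {n. fst \<mu> n \<noteq> 0} \<and> fst \<mu> 0 = 0 \<and> finite (snd \<mu>))"

definition Fspace :: "Fel set" where
  "Fspace = {f. finite {\<mu>. f \<mu> \<noteq> 0} \<and> (\<forall>\<mu>. f \<mu> \<noteq> 0 \<longrightarrow> valid_mono \<mu>)}"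

definition xmul :: "nat \<Rightarrow> Fel \<Rightarrow> Fel" where
  "xmul n f = (\<lambda>(e, S). if e n > 0 then f (e(n := e n - 1), S) else 0)"

definition dx :: "nat \<Rightarrow> Fel \<Rightarrow> Fel" where
  "dx n f = (\<lambda>(e, S). of_nat (e n + 1) * f (e(n := e n + 1), S))"

text \<open>Left multiplication by y_{m+1/2}.\<close>
definition ymul :: "nat \<Rightarrow> Fel \<Rightarrow> Fel" where
  "ymul m f = (\<lambda>(e, T). if m \<in> T then (-1) ^ card {t\<in>T. t < m} * f (e, T - {m}) else 0)"

text \<open>Left derivative d/dy_{m+1/2}.\<close>
definition dy :: "nat \<Rightarrow> Fel \<Rightarrow> Fel" where
  "dy m f = (\<lambda>(e, T). if m \<notin> T then (-1) ^ card {t\<in>T. t < m} * f (e, insert m T) else 0)"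

text \<open>Bosonic modes a_k, k an integer (beta = sqrt 2).\<close>
definition amode :: "int \<Rightarrow> Fel \<Rightarrow> Fel" where
  "amode k f =
    (if k < 0 then (let n = nat (-k) in
        (\<lambda>\<mu>. (-1) ^ (n - 1) * fact n / complex_of_real (sqrt 2) * xmul n f \<mu>))
     else if k > 0 then (let n = nat k in
        (\<lambda>\<mu>. (-1) ^ (n - 1) * complex_of_real (sqrt 2) / fact (n - 1) * dx n f \<mu>))
     else (\<lambda>\<mu>. 0))"

text \<open>Fermionic modes b_r, r = j + 1/2 with j an integer.
  j >= 0: r = m + 1/2 with m = j;  j < 0: r = -(m+1/2) with m = -j-1.\<close>
definition bmode :: "int \<Rightarrow> Fel \<Rightarrow> Fel" where
  "bmode j f =
    (if j \<ge> 0 then (let m = nat j in (\<lambda>\<mu>. (-1) ^ m / fact m * dy m f \<mu>))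
     else (let m = nat (- j - 1) in (\<lambda>\<mu>. (-1) ^ m * fact m * ymul m f \<mu>)))"

definition anord :: "int \<Rightarrow> int \<Rightarrow> Fel \<Rightarrow> Fel" where
  "anord m k f = (if m > 0 \<and> k < 0 then amode k (amode m f) else amode m (amode k f))"

text \<open>b_{j+1/2} has positive index iff j >= 0; interchange of odd modes gives a sign.\<close>
definition bnord :: "int \<Rightarrow> int \<Rightarrow> Fel \<Rightarrow> Fel" where
  "bnord j k f = (if j \<ge> 0 \<and> k < 0 then (\<lambda>\<mu>. - bmode k (bmode j f) \<mu>)
                  else bmode j (bmode k f))"

text \<open>L_n = 1/2 sum_m :a_m a_{n-m}: + 1/4 sum_r (n - 2r) :b_r b_{n-r}:,
  with r = j + 1/2 and n - r = (n - j - 1) + 1/2; infinite sums taken coefficientwise.\<close>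
definition Lop :: "int \<Rightarrow> Fel \<Rightarrow> Fel" where
  "Lop n f = (\<lambda>\<mu>.
      (1/2) * (\<Sum>\<^sub>\<infinity>m::int. anord m (n - m) f \<mu>)
    + (1/4) * (\<Sum>\<^sub>\<infinity>j::int. of_int (n - 2 * j - 1) * bnord j (n - j - 1) f \<mu>))"

definition DF :: "Fel \<Rightarrow> Fel" where
  "DF f = (\<lambda>\<mu>. (\<Sum>\<^sub>\<infinity>n\<in>{1::nat..}. xmul n (dx (n + 1) f) \<mu>)
             + (\<Sum>\<^sub>\<infinity>m::nat. ymul m (dy (m + 1) f) \<mu>))"

end

(*
  In L_1 the only normally ordered products that survive pair a creation mode with an
  annihilation mode: a_{-n} a_{n+1} = -x_n d/dx_{n+1}, because the normalisations n!/beta and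
  beta/n! cancel, and (m+1) b_{-(m+1/2)} b_{m+3/2} = -y_{m+1/2} d/dy_{m+3/2}. Each such product
  occurs twice in the sums over modes, once for each order of its two factors, and this
  doubling (with the weight n - 2r = -+2(m+1) on the fermions) exactly cancels the prefactors
  1/2 and 1/4. All sums are finite coefficientwise, because f has finite support.
*)
theory Submission
  imports Defs
begin

lemma has_sum_two_reindexings:
  fixes g :: "'b \<Rightarrow> 'c::topological_comm_monoid_add"
  assumes "(h has_sum s) A"
    and "inj_on p A" and "inj_on q A" and "p ` A \<inter> q ` A = {}"
    and "\<And>x. x \<in> A \<Longrightarrow> g (p x) = h x" and "\<And>x. x \<in> A \<Longrightarrow> g (q x) = h x"
    and "\<And>y. y \<notin> p ` A \<union> q ` A \<Longrightarrow> g y = 0"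
  shows "(g has_sum (s + s)) UNIV"
proof -
  have "((g \<circ> p) has_sum s) A"
    using assms(1) by (rule has_sum_cong[THEN iffD1, rotated]) (simp add: assms(5))
  then have "(g has_sum s) (p ` A)"
    using assms(2) by (simp add: has_sum_reindex)
  moreover have "((g \<circ> q) has_sum s) A"
    using assms(1) by (rule has_sum_cong[THEN iffD1, rotated]) (simp add: assms(6))
  then have "(g has_sum s) (q ` A)"
    using assms(3) by (simp add: has_sum_reindex)
  ultimately have "(g has_sum (s + s)) (p ` A \<union> q ` A)"
    using assms(4) by (rule has_sum_Un_disjoint)
  also have "?this \<longleftrightarrow> (g has_sum (s + s)) UNIV"
    by (rule has_sum_cong_neutral) (use assms(7) in auto)
  finally show ?thesis .
qed

lemma xmul_cmult: "xmul n (\<lambda>\<mu>. c * g \<mu>) = (\<lambda>\<mu>. c * xmul n g \<mu>)"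
  by (auto simp: xmul_def fun_eq_iff)

lemma ymul_cmult: "ymul m (\<lambda>\<mu>. c * g \<mu>) = (\<lambda>\<mu>. c * ymul m g \<mu>)"
  by (auto simp: ymul_def fun_eq_iff)

lemma xmul_dx_finite_support:
  assumes "f \<in> Fspace"
  shows "finite {n. xmul n (dx (n + 1) f) (e, S) \<noteq> 0}"
proof (cases "\<exists>n. xmul n (dx (n + 1) f) (e, S) \<noteq> 0")
  case True
  then obtain n where "xmul n (dx (n + 1) f) (e, S) \<noteq> 0" by blast
  define e' where "e' = (e(n := e n - 1))(n + 1 := e (n + 1) + 1)"
  have "f (e', S) \<noteq> 0"
    using \<open>xmul n _ _ \<noteq> 0\<close> by (auto simp: xmul_def dx_def e'_def split: if_splits)
  then have "finite {i. e' i \<noteq> 0}"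
    using assms by (auto simp: Fspace_def valid_mono_def)
  moreover have "{i. e i \<noteq> 0} \<subseteq> {i. e' i \<noteq> 0} \<union> {n, n + 1}"
    by (auto simp: e'_def)
  ultimately have "finite {i. e i \<noteq> 0}"
    by (meson finite.intros finite_Un finite_subset)
  moreover have "{n. xmul n (dx (n + 1) f) (e, S) \<noteq> 0} \<subseteq> {i. e i \<noteq> 0}"
    by (auto simp: xmul_def split: if_splits)
  ultimately show ?thesis by (rule finite_subset[rotated])
qed simp

lemma ymul_dy_finite_support:
  assumes "f \<in> Fspace"
  shows "finite {m. ymul m (dy (m + 1) f) (e, S) \<noteq> 0}"
proof (cases "\<exists>m. ymul m (dy (m + 1) f) (e, S) \<noteq> 0")
  case True
  then obtain m where "ymul m (dy (m + 1) f) (e, S) \<noteq> 0" by blast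
  then have "f (e, insert (m + 1) (S - {m})) \<noteq> 0"
    by (auto simp: ymul_def dy_def split: if_splits)
  then have "valid_mono (e, insert (m + 1) (S - {m}))"
    using assms by (auto simp: Fspace_def)
  then have "finite S" by (simp add: valid_mono_def)
  moreover have "{m. ymul m (dy (m + 1) f) (e, S) \<noteq> 0} \<subseteq> S"
    by (auto simp: ymul_def split: if_splits)
  ultimately show ?thesis by (rule finite_subset[rotated])
qed simp

lemma xmul_dx_summable_on:
  assumes "f \<in> Fspace"
  shows "(\<lambda>n. xmul n (dx (n + 1) f) \<mu>) summable_on A"
proof -
  obtain e S where "\<mu> = (e, S)" by (cases \<mu>)
  then show ?thesis
    using xmul_dx_finite_support[OF assms, of e S]
    by (intro finite_nonzero_values_imp_summable_on) (auto elim: rev_finite_subset)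
qed

lemma ymul_dy_summable_on:
  assumes "f \<in> Fspace"
  shows "(\<lambda>m. ymul m (dy (m + 1) f) \<mu>) summable_on A"
proof -
  obtain e S where "\<mu> = (e, S)" by (cases \<mu>)
  then show ?thesis
    using ymul_dy_finite_support[OF assms, of e S]
    by (intro finite_nonzero_values_imp_summable_on) (auto elim: rev_finite_subset)
qed

lemma amode_minus_int:
  "1 \<le> n \<Longrightarrow> amode (- int n) g =
     (\<lambda>\<mu>. ((-1) ^ (n - 1) * fact n / complex_of_real (sqrt 2)) * xmul n g \<mu>)"
  by (simp add: amode_def)

lemma amode_int_succ:
  "amode (int n + 1) g = (\<lambda>\<mu>. ((-1) ^ n * complex_of_real (sqrt 2) / fact n) * dx (n + 1) g \<mu>)"
  by (simp add: amode_def nat_add_distrib)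

lemma amode_minus_int_amode_int_succ:
  assumes "1 \<le> n"
  shows "amode (- int n) (amode (int n + 1) f) = (\<lambda>\<mu>. - xmul n (dx (n + 1) f) \<mu>)"
proof -
  have "(-1 :: complex) ^ (n - 1) * (-1) ^ n = -1"
    using assms by (cases n) simp_all
  then have "((-1) ^ (n - 1) * fact n / complex_of_real (sqrt 2))
               * (((-1) ^ n * complex_of_real (sqrt 2) / fact n) * z) = - z" for z :: complex
    by (simp add: field_simps)
  then show ?thesis
    using assms by (simp only: amode_minus_int amode_int_succ xmul_cmult)
qed

lemma bmode_int: "bmode (int m) g = (\<lambda>\<mu>. ((-1) ^ m / fact m) * dy m g \<mu>)"
  by (simp add: bmode_def)

lemma bmode_minus_int_minus_one:
  "bmode (- int m - 1) g = (\<lambda>\<mu>. ((-1) ^ m * fact m) * ymul m g \<mu>)"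
  by (simp add: bmode_def)

lemma bmode_minus_int_minus_one_bmode_int_succ:
  "of_nat (m + 1) * bmode (- int m - 1) (bmode (int m + 1) f) \<mu> = - ymul m (dy (m + 1) f) \<mu>"
proof -
  have "(fact (m + 1) :: complex) = of_nat (Suc m) * fact m"
    by (simp add: fact_Suc del: of_nat_Suc)
  moreover have "(of_nat (Suc m) :: complex) \<noteq> 0"
    by (rule of_nat_neq_0)
  ultimately have "of_nat (m + 1) * (((-1) ^ m * fact m) * (((-1) ^ (m + 1) / fact (m + 1)) * z))
                     = - z" for z :: complex
    by (simp add: field_simps del: of_nat_Suc)
  then show ?thesis
    by (simp only: bmode_minus_int_minus_one bmode_int[of "m + 1", unfolded of_nat_add of_nat_1]
        ymul_cmult)
qed

definition Lop_boson_summand :: "int \<Rightarrow> int \<Rightarrow> Fel \<Rightarrow> Fel" where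
  "Lop_boson_summand n k f = anord k (n - k) f"

definition Lop_fermion_summand :: "int \<Rightarrow> int \<Rightarrow> Fel \<Rightarrow> Fel" where
  "Lop_fermion_summand n j f = (\<lambda>\<mu>. of_int (n - 2 * j - 1) * bnord j (n - j - 1) f \<mu>)"

lemma Lop_eq_summands:
  "Lop n f \<mu> = 1/2 * (\<Sum>\<^sub>\<infinity>k. Lop_boson_summand n k f \<mu>) + 1/4 * (\<Sum>\<^sub>\<infinity>j. Lop_fermion_summand n j f \<mu>)"
  unfolding Lop_def Lop_boson_summand_def Lop_fermion_summand_def ..

lemma Lop_boson_summand_one_int_succ:
  "1 \<le> n \<Longrightarrow> Lop_boson_summand 1 (int n + 1) f = (\<lambda>\<mu>. - xmul n (dx (n + 1) f) \<mu>)"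
  by (simp add: Lop_boson_summand_def anord_def amode_minus_int_amode_int_succ)

lemma Lop_boson_summand_one_minus_int:
  "1 \<le> n \<Longrightarrow> Lop_boson_summand 1 (- int n) f = (\<lambda>\<mu>. - xmul n (dx (n + 1) f) \<mu>)"
  using amode_minus_int_amode_int_succ[of n f]
  by (simp add: Lop_boson_summand_def anord_def add.commute)

lemma Lop_boson_summand_one_zero_one:
  "k \<in> {0, 1} \<Longrightarrow> Lop_boson_summand 1 k f = (\<lambda>\<mu>. 0)"
  by (auto simp: Lop_boson_summand_def anord_def amode_def dx_def)

text \<open>The Koszul sign of the normal ordering compensates the sign change of the weight n - 2r,
  so both orders of the pair contribute with the same sign.\<close>

lemma Lop_fermion_summand_one_int_succ:
  "Lop_fermion_summand 1 (int m + 1) f \<mu> = - 2 * ymul m (dy (m + 1) f) \<mu>"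
proof -
  have "Lop_fermion_summand 1 (int m + 1) f \<mu>
          = 2 * (of_nat (m + 1) * bmode (- int m - 1) (bmode (int m + 1) f) \<mu>)"
    by (simp add: Lop_fermion_summand_def bnord_def algebra_simps)
  then show ?thesis
    by (simp only: bmode_minus_int_minus_one_bmode_int_succ) simp
qed

lemma Lop_fermion_summand_one_minus_int_minus_one:
  "Lop_fermion_summand 1 (- int m - 1) f \<mu> = - 2 * ymul m (dy (m + 1) f) \<mu>"
proof -
  have "Lop_fermion_summand 1 (- int m - 1) f \<mu>
          = 2 * (of_nat (m + 1) * bmode (- int m - 1) (bmode (int m + 1) f) \<mu>)"
    by (simp add: Lop_fermion_summand_def bnord_def algebra_simps)
  then show ?thesis
    by (simp only: bmode_minus_int_minus_one_bmode_int_succ) simp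
qed

lemma Lop_fermion_summand_one_zero: "Lop_fermion_summand 1 0 f = (\<lambda>\<mu>. 0)"
  by (simp add: Lop_fermion_summand_def)

lemma has_sum_Lop_boson_summand_one:
  assumes "f \<in> Fspace"
  shows "((\<lambda>k. Lop_boson_summand 1 k f \<mu>) has_sum
            (- 2 * (\<Sum>\<^sub>\<infinity>n\<in>{1..}. xmul n (dx (n + 1) f) \<mu>))) UNIV"
proof -
  let ?X = "\<Sum>\<^sub>\<infinity>n\<in>{1..}. xmul n (dx (n + 1) f) \<mu>"
  have "((\<lambda>n. - xmul n (dx (n + 1) f) \<mu>) has_sum (- ?X)) {1..}"
    using xmul_dx_summable_on[OF assms] by (simp add: has_sum_uminus)
  then have "((\<lambda>k. Lop_boson_summand 1 k f \<mu>) has_sum (- ?X + - ?X)) UNIV"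
  proof (rule has_sum_two_reindexings)
    show "inj_on (\<lambda>n. int n + 1) {1..}" "inj_on (\<lambda>n. - int n) {1..}"
      by (simp_all add: inj_on_def)
    show "(\<lambda>n. int n + 1) ` {1..} \<inter> (\<lambda>n. - int n) ` {1..} = {}"
      by auto
    show "Lop_boson_summand 1 (int n + 1) f \<mu> = - xmul n (dx (n + 1) f) \<mu>"
      and "Lop_boson_summand 1 (- int n) f \<mu> = - xmul n (dx (n + 1) f) \<mu>" if "n \<in> {1..}" for n
      using that by (simp_all add: Lop_boson_summand_one_int_succ Lop_boson_summand_one_minus_int)
    fix k :: int
    assume "k \<notin> (\<lambda>n. int n + 1) ` {1..} \<union> (\<lambda>n. - int n) ` {1..}"
    then have "k \<in> {0, 1}"
      by (cases "k \<ge> 2"; cases "k \<le> -1") (auto simp: image_iff Bex_def, presburger+)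
    then show "Lop_boson_summand 1 k f \<mu> = 0"
      by (simp add: Lop_boson_summand_one_zero_one)
  qed
  then show ?thesis
    by simp
qed

lemma has_sum_Lop_fermion_summand_one:
  assumes "f \<in> Fspace"
  shows "((\<lambda>j. Lop_fermion_summand 1 j f \<mu>) has_sum
            (- 4 * (\<Sum>\<^sub>\<infinity>m. ymul m (dy (m + 1) f) \<mu>))) UNIV"
proof -
  let ?Y = "\<Sum>\<^sub>\<infinity>m. ymul m (dy (m + 1) f) \<mu>"
  have "((\<lambda>m. - 2 * ymul m (dy (m + 1) f) \<mu>) has_sum (- 2 * ?Y)) UNIV"
    using ymul_dy_summable_on[OF assms] by (intro has_sum_cmult_right) simp
  then have "((\<lambda>j. Lop_fermion_summand 1 j f \<mu>) has_sum (- 2 * ?Y + - 2 * ?Y)) UNIV"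
  proof (rule has_sum_two_reindexings)
    show "inj_on (\<lambda>m. int m + 1) UNIV" "inj_on (\<lambda>m. - int m - 1) UNIV"
      by (simp_all add: inj_on_def)
    show "range (\<lambda>m. int m + 1) \<inter> range (\<lambda>m. - int m - 1) = {}"
      by auto
    show "Lop_fermion_summand 1 (int m + 1) f \<mu> = - 2 * ymul m (dy (m + 1) f) \<mu>"
      and "Lop_fermion_summand 1 (- int m - 1) f \<mu> = - 2 * ymul m (dy (m + 1) f) \<mu>" for m
      by (rule Lop_fermion_summand_one_int_succ Lop_fermion_summand_one_minus_int_minus_one)+
    fix j :: int
    assume "j \<notin> range (\<lambda>m. int m + 1) \<union> range (\<lambda>m. - int m - 1)"
    then have "j = 0"
      by (cases "j \<ge> 1"; cases "j \<le> -1") (auto simp: image_iff, presburger+)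
    then show "Lop_fermion_summand 1 j f \<mu> = 0"
      by (simp add: Lop_fermion_summand_one_zero)
  qed
  then show ?thesis
    by simp
qed

theorem proposition5p11:
  assumes "f \<in> Fspace"
  shows "Lop 1 f = (\<lambda>\<mu>. - DF f \<mu>)"
proof
  fix \<mu> :: mono
  have "(\<Sum>\<^sub>\<infinity>k. Lop_boson_summand 1 k f \<mu>) = - 2 * (\<Sum>\<^sub>\<infinity>n\<in>{1..}. xmul n (dx (n + 1) f) \<mu>)"
    using has_sum_Lop_boson_summand_one[OF assms] by (rule infsumI)
  moreover have "(\<Sum>\<^sub>\<infinity>j. Lop_fermion_summand 1 j f \<mu>) = - 4 * (\<Sum>\<^sub>\<infinity>m. ymul m (dy (m + 1) f) \<mu>)"
    using has_sum_Lop_fermion_summand_one[OF assms] by (rule infsumI)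
  ultimately show "Lop 1 f \<mu> = - DF f \<mu>"
    by (simp add: Lop_eq_summands DF_def)
qed

end
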